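(* Let $(X,0)$ be a pointed CFG-space over a Boolean algebra $B$ and let $U\subset X$ be a subset which is a CFG-space with the restricted metric and satisfies $0\in U$. Then for every $n\in\mathbb{N}$, $$\alpha_n(X)=\bigvee_{i=0}^{n}\alpha_i(U)\wedge\alpha_{n-i}(U^\perp).$$
   Context: A Boolean metric space over $B$ is a set $X$ with symmetric $d:X\times X\to B$, $d(x,y)=0$ iff $x=y$, and $d(x,z)\le d(x,y)\vee d(y,z)$. A partition of $B$ is a finite family of pairwise disjoint elements with supremum $1$; $x$ is a convex combination of $x_0,\dots,x_n$ with coefficients a partition $a_0,\dots,a_n$ if $a_i\wedge d(x,x_i)=0$ for all $i$. A CFG-space is a Boolean metric space that is convex (every such convex combination of its points exists in it) and finitely generated (some finite subset $S$ has every point as a convex combination of points of $S$). For a pointed space $(X,0)$ write $|x|=d(x,0)$; $x\perp y$ means $d(x,y)=|x|\vee|y|$; for $0\in U\subset X$, $U^\perp=\{y\in X: x\perp y\ \forall x\in U\}$. For a space $Y$ and integer $k>0$, $\alpha_k(Y)=\sup\{\bigwedge_{0\le i<j\le k}d(u_i,u_j): u_0,\dots,u_k\in Y\}$ (for CFG-spaces this supremum exists and is attained), and by convention $\alpha_0(Y)=1$. *)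

theory Defs
  imports Main
begin

definition bool_metric :: "'a set \<Rightarrow> ('a \<Rightarrow> 'a \<Rightarrow> 'b::boolean_algebra) \<Rightarrow> bool" where
  "bool_metric X d \<longleftrightarrow>
     (\<forall>x\<in>X. \<forall>y\<in>X. d x y = d y x) \<and>
     (\<forall>x\<in>X. \<forall>y\<in>X. d x y = bot \<longleftrightarrow> x = y) \<and>
     (\<forall>x\<in>X. \<forall>y\<in>X. \<forall>z\<in>X. d x z \<le> sup (d x y) (d y z))"

definition is_partition :: "nat \<Rightarrow> (nat \<Rightarrow> 'b::boolean_algebra) \<Rightarrow> bool" where
  "is_partition n a \<longleftrightarrow>
     (\<forall>i\<le>n. \<forall>j\<le>n. i \<noteq> j \<longrightarrow> inf (a i) (a j) = bot) \<and>
     Sup_fin (a ` {..n}) = top"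

definition convex_comb ::
  "('a \<Rightarrow> 'a \<Rightarrow> 'b::boolean_algebra) \<Rightarrow> 'a \<Rightarrow> nat \<Rightarrow> (nat \<Rightarrow> 'a) \<Rightarrow> (nat \<Rightarrow> 'b) \<Rightarrow> bool" where
  "convex_comb d x n xs a \<longleftrightarrow> is_partition n a \<and> (\<forall>i\<le>n. inf (a i) (d x (xs i)) = bot)"

definition convex_space :: "'a set \<Rightarrow> ('a \<Rightarrow> 'a \<Rightarrow> 'b::boolean_algebra) \<Rightarrow> bool" where
  "convex_space X d \<longleftrightarrow>
     (\<forall>n xs a. (\<forall>i\<le>n. xs i \<in> X) \<and> is_partition n a \<longrightarrow> (\<exists>x\<in>X. convex_comb d x n xs a))"

definition fin_generated :: "'a set \<Rightarrow> ('a \<Rightarrow> 'a \<Rightarrow> 'b::boolean_algebra) \<Rightarrow> bool" where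
  "fin_generated X d \<longleftrightarrow>
     (\<exists>S. finite S \<and> S \<subseteq> X \<and>
        (\<forall>x\<in>X. \<exists>n xs a. (\<forall>i\<le>n. xs i \<in> S) \<and> convex_comb d x n xs a))"

definition CFG_space :: "'a set \<Rightarrow> ('a \<Rightarrow> 'a \<Rightarrow> 'b::boolean_algebra) \<Rightarrow> bool" where
  "CFG_space X d \<longleftrightarrow> bool_metric X d \<and> convex_space X d \<and> fin_generated X d"

text \<open>Orthogonality in a pointed space with base point p: |x| = d x p.\<close>
definition orth :: "('a \<Rightarrow> 'a \<Rightarrow> 'b::boolean_algebra) \<Rightarrow> 'a \<Rightarrow> 'a \<Rightarrow> 'a \<Rightarrow> bool" where
  "orth d p x y \<longleftrightarrow> d x y = sup (d x p) (d y p)"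

definition orth_compl :: "'a set \<Rightarrow> ('a \<Rightarrow> 'a \<Rightarrow> 'b::boolean_algebra) \<Rightarrow> 'a \<Rightarrow> 'a set \<Rightarrow> 'a set" where
  "orth_compl X d p U = {y\<in>X. \<forall>x\<in>U. orth d p x y}"

definition is_lub :: "'b::order set \<Rightarrow> 'b \<Rightarrow> bool" where
  "is_lub A s \<longleftrightarrow> (\<forall>a\<in>A. a \<le> s) \<and> (\<forall>t. (\<forall>a\<in>A. a \<le> t) \<longrightarrow> s \<le> t)"

definition alpha :: "'a set \<Rightarrow> ('a \<Rightarrow> 'a \<Rightarrow> 'b::boolean_algebra) \<Rightarrow> nat \<Rightarrow> 'b" where
  "alpha Y d k = (if k = 0 then top else
     (THE s. is_lub {Inf_fin {d (u i) (u j) | i j. i < j \<and> j \<le> k} | u. \<forall>i\<le>k. u i \<in> Y} s))"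

end

theory Submission
  imports Defs
begin

text \<open>
  Both sides of the identity are elements of the Boolean algebra B, so by
  the Stone representation it suffices to compare them under every ultrafilter P of B,
  viewed as a Boolean homomorphism P : B \<rightarrow> bool.  Under P the Boolean metric
  collapses: "P-near" (\<not> P (d x y)) is an equivalence relation on X, and for a space Y
  finitely generated by S the element alpha_k(Y) exists (it is the finite join of the
  meets of all (k+1)-tuples from S) and P (alpha_k Y) holds iff Y meets more than k
  P-near classes.  Next, every point x of X has a projection proj x in the orthogonal
  complement W of U: the convex mixture that agrees with x where x is far from U and with
  the base point elsewhere.  Hence, under P, the classes of X are exactly the classes of
  U together with those of W, and the two families share only the class of the base
  point.  Counting classes of such a union gives the formula for P (alpha_n X).
\<close>

text \<open>An ultrafilter of a Boolean algebra, given by its indicator: a Boolean homomorphism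
  into bool.\<close>
definition uhom :: "('b::boolean_algebra \<Rightarrow> bool) \<Rightarrow> bool" where
  "uhom P \<longleftrightarrow> P top \<and> \<not> P bot \<and> (\<forall>x y. P (inf x y) = (P x \<and> P y))
     \<and> (\<forall>x. P (- x) = (\<not> P x))"

lemma uhom_top: "uhom P \<Longrightarrow> P top"
  and uhom_bot: "uhom P \<Longrightarrow> \<not> P bot"
  and uhom_inf: "uhom P \<Longrightarrow> P (inf x y) = (P x \<and> P y)"
  and uhom_neg: "uhom P \<Longrightarrow> P (- x) = (\<not> P x)"
  by (simp_all add: uhom_def)

lemma uhom_sup: "uhom P \<Longrightarrow> P (sup x y) = (P x \<or> P y)"
proof -
  assume P: "uhom P"
  have "P (sup x y) = P (- inf (- x) (- y))" by simp
  also have "\<dots> = (\<not> (\<not> P x \<and> \<not> P y))" by (simp only: uhom_neg[OF P] uhom_inf[OF P])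
  also have "\<dots> = (P x \<or> P y)" by blast
  finally show ?thesis .
qed

lemma uhom_mono: "uhom P \<Longrightarrow> x \<le> y \<Longrightarrow> P x \<Longrightarrow> P y"
  by (metis inf.absorb_iff1 uhom_inf)

lemma uhom_Sup_fin: "finite A \<Longrightarrow> A \<noteq> {} \<Longrightarrow> uhom P \<Longrightarrow> P (Sup_fin A) = (\<exists>a\<in>A. P a)"
  by (induction A rule: finite_ne_induct) (simp_all add: uhom_sup)

lemma uhom_Inf_fin: "finite A \<Longrightarrow> A \<noteq> {} \<Longrightarrow> uhom P \<Longrightarrow> P (Inf_fin A) = (\<forall>a\<in>A. P a)"
  by (induction A rule: finite_ne_induct) (simp_all add: uhom_inf)

text \<open>Existence of enough ultrafilters (Stone): every nonzero element lies in a maximal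
  proper filter, obtained by Zorn's lemma, and maximal filters are ultrafilters.\<close>
definition proper_filter :: "'b::boolean_algebra set \<Rightarrow> bool" where
  "proper_filter F \<longleftrightarrow> top \<in> F \<and> bot \<notin> F \<and> (\<forall>x\<in>F. \<forall>y. x \<le> y \<longrightarrow> y \<in> F)
     \<and> (\<forall>x\<in>F. \<forall>y\<in>F. inf x y \<in> F)"

lemma proper_filter_Union_chain:
  assumes "C \<noteq> {}" and "\<And>F. F \<in> C \<Longrightarrow> proper_filter F"
    and "\<And>F G. F \<in> C \<Longrightarrow> G \<in> C \<Longrightarrow> F \<subseteq> G \<or> G \<subseteq> F"
  shows "proper_filter (\<Union>C)"
  unfolding proper_filter_def
proof (intro conjI ballI allI impI)
  show "top \<in> \<Union>C" "bot \<notin> \<Union>C"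
    using assms(1,2) unfolding proper_filter_def by auto
  show "y \<in> \<Union>C" if "x \<in> \<Union>C" "x \<le> y" for x y
    using that assms(2) unfolding proper_filter_def by blast
  show "inf x y \<in> \<Union>C" if xy: "x \<in> \<Union>C" "y \<in> \<Union>C" for x y
  proof -
    obtain F G where "F \<in> C" "x \<in> F" "G \<in> C" "y \<in> G" using xy by blast
    then obtain H where "H \<in> C" "x \<in> H" "y \<in> H" using assms(3) by blast
    then have "inf x y \<in> H" using assms(2) unfolding proper_filter_def by blast
    with \<open>H \<in> C\<close> show ?thesis by blast
  qed
qed

text \<open>A maximal proper filter contains x or its complement; otherwise adjoining x would give
  a larger proper filter.\<close>
lemma maximal_filter_prime:
  fixes M :: "'b::boolean_algebra set"
  assumes M: "proper_filter M" and max: "\<And>F. proper_filter F \<Longrightarrow> M \<subseteq> F \<Longrightarrow> F = M"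
  shows "x \<in> M \<or> - x \<in> M"
proof (rule ccontr)
  assume neither: "\<not> (x \<in> M \<or> - x \<in> M)"
  define M' where "M' = {y. \<exists>f\<in>M. inf f x \<le> y}"
  have "bot \<notin> M'"
  proof
    assume "bot \<in> M'"
    then obtain f where "f \<in> M" "inf f x = bot" unfolding M'_def using bot_unique by blast
    then have "- x \<in> M" using M unfolding proper_filter_def by (metis inf_shunt)
    then show False using neither by blast
  qed
  have "proper_filter M'"
    unfolding proper_filter_def
  proof (intro conjI ballI allI impI)
    show "top \<in> M'" using M unfolding M'_def proper_filter_def by auto
    show "bot \<notin> M'" by fact
    show "z \<in> M'" if "y \<in> M'" "y \<le> z" for y z
    proof -
      obtain f where "f \<in> M" "inf f x \<le> y" using \<open>y \<in> M'\<close> unfolding M'_def by blast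
      then show ?thesis using \<open>y \<le> z\<close> unfolding M'_def by (blast intro: order.trans[of _ y z])
    qed
    show "inf y z \<in> M'" if yz: "y \<in> M'" "z \<in> M'" for y z
    proof -
      obtain f g where "f \<in> M" "inf f x \<le> y" "g \<in> M" "inf g x \<le> z"
        using yz unfolding M'_def by blast
      have "inf (inf f x) (inf g x) \<le> inf y z"
        using \<open>inf f x \<le> y\<close> \<open>inf g x \<le> z\<close> by (rule inf_mono)
      then have "inf (inf f g) x \<le> inf y z" by (simp add: inf_aci)
      moreover have "inf f g \<in> M" using M \<open>f \<in> M\<close> \<open>g \<in> M\<close> unfolding proper_filter_def by blast
      ultimately show ?thesis unfolding M'_def by blast
    qed
  qed
  moreover have "M \<subseteq> M'" unfolding M'_def using inf_le1 by blast
  ultimately have "M' = M" by (rule max)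
  moreover have "x \<in> M'" using M unfolding M'_def proper_filter_def by auto
  ultimately show False using neither by blast
qed

lemma filter_chain_bound:
  fixes c :: "'b::boolean_algebra"
  assumes "c \<noteq> bot" and C: "C \<in> chains {F. proper_filter F \<and> c \<in> F}"
  shows "\<exists>F\<in>{F. proper_filter F \<and> c \<in> F}. \<forall>G\<in>C. G \<subseteq> F"
proof (cases "C = {}")
  case True
  have "proper_filter {y. c \<le> y}"
    using assms unfolding proper_filter_def
    by (simp add: bot_unique) (metis order.trans)
  then show ?thesis using True by blast
next
  case False
  have CA: "\<And>F. F \<in> C \<Longrightarrow> proper_filter F \<and> c \<in> F"
    using C unfolding chains_def by blast
  have "proper_filter (\<Union>C)"
  proof (rule proper_filter_Union_chain[OF False])
    show "\<And>F. F \<in> C \<Longrightarrow> proper_filter F" using CA by blast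
    show "\<And>F G. F \<in> C \<Longrightarrow> G \<in> C \<Longrightarrow> F \<subseteq> G \<or> G \<subseteq> F"
      using C unfolding chains_def chain_subset_def by blast
  qed
  moreover have "c \<in> \<Union>C" using False CA by blast
  ultimately show ?thesis by blast
qed

lemma exists_uhom:
  fixes c :: "'b::boolean_algebra"
  assumes "c \<noteq> bot"
  shows "\<exists>P. uhom P \<and> P c"
proof -
  define A where "A = {F. proper_filter F \<and> c \<in> F}"
  have "\<forall>C\<in>chains A. \<exists>F\<in>A. \<forall>G\<in>C. G \<subseteq> F"
    unfolding A_def using filter_chain_bound[OF assms] by blast
  then obtain M where "M \<in> A" and max: "\<forall>F\<in>A. M \<subseteq> F \<longrightarrow> F = M"
    by (blast dest: Zorn_Lemma2)
  then have M: "proper_filter M" "c \<in> M" unfolding A_def by auto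
  have prime: "x \<in> M \<or> - x \<in> M" for x
  proof (rule maximal_filter_prime[OF M(1)])
    fix F assume "proper_filter F" "M \<subseteq> F"
    then show "F = M" using max M(2) unfolding A_def by blast
  qed
  have "uhom (\<lambda>y. y \<in> M)"
    unfolding uhom_def
  proof (intro conjI allI)
    show "top \<in> M" "bot \<notin> M" using M(1) unfolding proper_filter_def by auto
    show "(inf x y \<in> M) = (x \<in> M \<and> y \<in> M)" for x y
      using M(1) inf.cobounded1[of x y] inf.cobounded2[of x y]
      unfolding proper_filter_def by blast
    show "(- x \<in> M) = (x \<notin> M)" for x
    proof
      assume "- x \<in> M"
      show "x \<notin> M"
      proof
        assume "x \<in> M"
        then have "inf x (- x) \<in> M" using \<open>- x \<in> M\<close> M(1) unfolding proper_filter_def by blast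
        then show False using M(1) unfolding proper_filter_def by simp
      qed
    qed (use prime in blast)
  qed
  with M(2) show ?thesis by blast
qed

lemma uhom_le:
  fixes a b :: "'b::boolean_algebra"
  assumes "\<And>P. uhom P \<Longrightarrow> P a \<Longrightarrow> P b"
  shows "a \<le> b"
proof (rule ccontr)
  assume "\<not> a \<le> b"
  then have "inf a (- b) \<noteq> bot" by (simp add: inf_shunt)
  then obtain P where "uhom P" "P (inf a (- b))" using exists_uhom by blast
  then show False using assms[of P] by (simp add: uhom_inf uhom_neg)
qed

lemma uhom_ext:
  fixes a b :: "'b::boolean_algebra"
  assumes "\<And>P. uhom P \<Longrightarrow> P a = P b"
  shows "a = b"
proof (rule order.antisym)
  show "a \<le> b" by (rule uhom_le) (use assms in blast)
  show "b \<le> a" by (rule uhom_le) (use assms in blast)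
qed

lemma uhom_partition:
  assumes "is_partition n a" and P: "uhom P"
  shows "\<exists>l\<le>n. P (a l)"
proof -
  have "P (Sup_fin (a ` {..n}))"
    using assms(1) uhom_top[OF P] unfolding is_partition_def by simp
  moreover have "finite (a ` {..n})" "a ` {..n} \<noteq> {}" by auto
  ultimately have "\<exists>b\<in>a ` {..n}. P b" using uhom_Sup_fin[OF _ _ P] by simp
  then show ?thesis by blast
qed

definition generates :: "('a \<Rightarrow> 'a \<Rightarrow> 'b::boolean_algebra) \<Rightarrow> 'a set \<Rightarrow> 'a set \<Rightarrow> bool" where
  "generates d S Y \<longleftrightarrow> (\<forall>y\<in>Y. \<exists>n xs a. (\<forall>i\<le>n. xs i \<in> S) \<and> convex_comb d y n xs a)"

lemma generates_nonempty:
  assumes "generates d S Y" and "Y \<noteq> {}" shows "S \<noteq> {}"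
proof -
  obtain y where "y \<in> Y" using assms(2) by blast
  then obtain n xs a where "\<forall>i\<le>n. xs i \<in> S" "convex_comb d y n xs a"
    using assms(1) unfolding generates_def by metis
  then have "xs 0 \<in> S" by simp
  then show ?thesis by blast
qed

lemma bool_metric_subset: "bool_metric X d \<Longrightarrow> Y \<subseteq> X \<Longrightarrow> bool_metric Y d"
  unfolding bool_metric_def subset_iff by blast

definition near :: "('b::boolean_algebra \<Rightarrow> bool) \<Rightarrow> ('a \<Rightarrow> 'a \<Rightarrow> 'b) \<Rightarrow> 'a \<Rightarrow> 'a \<Rightarrow> bool" where
  "near P d x y \<longleftrightarrow> \<not> P (d x y)"

lemma near_of_disjoint:
  assumes "uhom P" and "inf a (d x y) = bot" and "P a"
  shows "near P d x y"
  using assms uhom_inf[OF assms(1), of a "d x y"] uhom_bot[OF assms(1)] unfolding near_def by simp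

text \<open>A convex combination is P-near one of its points, namely the one whose coefficient
  lies in P.  Hence every point of a generated space is P-near a generator.\<close>
lemma convex_comb_near:
  assumes "uhom P" and "convex_comb d x n xs a"
  shows "\<exists>l\<le>n. near P d x (xs l)"
proof -
  obtain l where "l \<le> n" and Pa: "P (a l)"
    using uhom_partition assms unfolding convex_comb_def by blast
  have "inf (a l) (d x (xs l)) = bot"
    using assms(2) \<open>l \<le> n\<close> unfolding convex_comb_def by blast
  then have "near P d x (xs l)" by (rule near_of_disjoint[OF assms(1) _ Pa])
  then show ?thesis using \<open>l \<le> n\<close> by blast
qed

lemma generates_near:
  assumes "uhom P" and "generates d S Y" and "y \<in> Y"
  shows "\<exists>s\<in>S. near P d y s"
proof -
  obtain n xs a where S: "\<forall>i\<le>n. xs i \<in> S" and comb: "convex_comb d y n xs a"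
    using assms(2,3) unfolding generates_def by metis
  obtain l where "l \<le> n" "near P d y (xs l)" using convex_comb_near[OF assms(1) comb] by blast
  then show ?thesis using S by blast
qed

lemma dist_sym: "bool_metric X d \<Longrightarrow> x \<in> X \<Longrightarrow> y \<in> X \<Longrightarrow> d x y = d y x"
  unfolding bool_metric_def by blast

context
  fixes X :: "'a set" and d :: "'a \<Rightarrow> 'a \<Rightarrow> 'b::boolean_algebra" and P :: "'b \<Rightarrow> bool"
  assumes metric: "bool_metric X d" and P: "uhom P"
begin

lemma near_refl:
  assumes "x \<in> X" shows "near P d x x"
proof -
  have "d x x = bot" using metric assms unfolding bool_metric_def by blast
  then show ?thesis using uhom_bot[OF P] unfolding near_def by simp
qed

lemma near_sym:
  assumes "x \<in> X" "y \<in> X" shows "near P d x y \<longleftrightarrow> near P d y x"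
  using dist_sym[OF metric assms] unfolding near_def by simp

lemma far_triangle:
  assumes "x \<in> X" "y \<in> X" "z \<in> X" and "P (d x z)"
  shows "P (d x y) \<or> P (d y z)"
proof -
  have "d x z \<le> sup (d x y) (d y z)" using metric assms(1-3) unfolding bool_metric_def by blast
  then show ?thesis using uhom_mono[OF P _ assms(4)] uhom_sup[OF P] by blast
qed

lemma near_trans:
  assumes "x \<in> X" "y \<in> X" "z \<in> X" and "near P d x y" "near P d y z"
  shows "near P d x z"
  using far_triangle[OF assms(1-3)] assms(4,5) unfolding near_def by blast

lemma near_far:
  assumes "x \<in> X" "y \<in> X" "z \<in> X" and "near P d x y"
  shows "P (d x z) \<longleftrightarrow> P (d y z)"
proof
  assume "P (d x z)"
  then show "P (d y z)" using far_triangle[OF assms(1,2,3)] assms(4) unfolding near_def by blast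
next
  assume "P (d y z)"
  moreover have "near P d y x" using assms(1,2,4) near_sym by blast
  ultimately show "P (d x z)" using far_triangle[OF assms(2,1,3)] unfolding near_def by blast
qed

lemma near_far_right:
  assumes "x \<in> X" "y \<in> X" "z \<in> X" and "near P d y z"
  shows "P (d x y) \<longleftrightarrow> P (d x z)"
  using near_far[OF assms(2,3,1,4)] dist_sym[OF metric assms(1,2)] dist_sym[OF metric assms(1,3)]
  by simp

end

definition pair_dists :: "('a \<Rightarrow> 'a \<Rightarrow> 'b) \<Rightarrow> nat \<Rightarrow> (nat \<Rightarrow> 'a) \<Rightarrow> 'b set" where
  "pair_dists d k u = {d (u i) (u j) | i j. i < j \<and> j \<le> k}"

definition meet :: "('a \<Rightarrow> 'a \<Rightarrow> 'b::boolean_algebra) \<Rightarrow> nat \<Rightarrow> (nat \<Rightarrow> 'a) \<Rightarrow> 'b" where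
  "meet d k u = Inf_fin (pair_dists d k u)"

definition meets :: "('a \<Rightarrow> 'a \<Rightarrow> 'b::boolean_algebra) \<Rightarrow> nat \<Rightarrow> 'a set \<Rightarrow> 'b set" where
  "meets d k Y = {meet d k u | u. \<forall>i\<le>k. u i \<in> Y}"

lemma alpha_meets: "k \<noteq> 0 \<Longrightarrow> alpha Y d k = (THE s. is_lub (meets d k Y) s)"
  by (simp add: alpha_def meets_def meet_def pair_dists_def)

lemma pair_dists_subset:
  "(\<forall>i\<le>k. u i \<in> Y) \<Longrightarrow> pair_dists d k u \<subseteq> (\<lambda>(x, y). d x y) ` (Y \<times> Y)"
  unfolding pair_dists_def by fastforce

lemma pair_dists_finite: "finite (pair_dists d k u)"
  using pair_dists_subset[of k u "u ` {..k}" d] by (rule finite_subset) auto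

lemma pair_dists_nonempty: "k \<noteq> 0 \<Longrightarrow> pair_dists d k u \<noteq> {}"
  unfolding pair_dists_def by force

lemma uhom_meet:
  assumes "uhom P" and "k \<noteq> 0"
  shows "P (meet d k u) \<longleftrightarrow> (\<forall>i j. i < j \<and> j \<le> k \<longrightarrow> P (d (u i) (u j)))"
  unfolding meet_def uhom_Inf_fin[OF pair_dists_finite pair_dists_nonempty[OF assms(2)] assms(1)]
  unfolding pair_dists_def by blast

text \<open>Over a finite set there are only finitely many meets, each being the meet of a
  subset of the finite set of distances.\<close>
lemma meets_finite:
  assumes "finite Y" shows "finite (meets d k Y)"
proof (rule finite_subset)
  show "meets d k Y \<subseteq> Inf_fin ` Pow ((\<lambda>(x, y). d x y) ` (Y \<times> Y))"
  proof
    fix c assume "c \<in> meets d k Y"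
    then obtain u where u: "\<forall>i\<le>k. u i \<in> Y" and c: "c = Inf_fin (pair_dists d k u)"
      unfolding meets_def meet_def by blast
    have "pair_dists d k u \<in> Pow ((\<lambda>(x, y). d x y) ` (Y \<times> Y))"
      using pair_dists_subset[OF u] by simp
    with c show "c \<in> Inf_fin ` Pow ((\<lambda>(x, y). d x y) ` (Y \<times> Y))" by (rule image_eqI)
  qed
  show "finite (Inf_fin ` Pow ((\<lambda>(x, y). d x y) ` (Y \<times> Y)))" using assms by simp
qed

lemma meets_nonempty:
  assumes "y \<in> Y" shows "meets d k Y \<noteq> {}"
proof -
  have "meet d k (\<lambda>_. y) \<in> meets d k Y"
    using assms unfolding meets_def by (intro CollectI exI[of _ "\<lambda>_. y"]) simp
  then show ?thesis by blast
qed

lemma meets_mono: "S \<subseteq> Y \<Longrightarrow> meets d k S \<subseteq> meets d k Y"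
  unfolding meets_def by blast

text \<open>Y contains k+1 pairwise P-far points; this is what alpha_k(Y) means under P.\<close>
definition far_tuple :: "('b \<Rightarrow> bool) \<Rightarrow> ('a \<Rightarrow> 'a \<Rightarrow> 'b) \<Rightarrow> 'a set \<Rightarrow> nat \<Rightarrow> bool" where
  "far_tuple P d Y k \<longleftrightarrow>
     (\<exists>u. (\<forall>i\<le>k. u i \<in> Y) \<and> (\<forall>i j. i < j \<and> j \<le> k \<longrightarrow> P (d (u i) (u j))))"

lemma far_tuple_mono:
  assumes "S \<subseteq> Y" and "far_tuple P d S k" shows "far_tuple P d Y k"
proof -
  obtain u where "\<forall>i\<le>k. u i \<in> S" "\<forall>i j. i < j \<and> j \<le> k \<longrightarrow> P (d (u i) (u j))"
    using assms(2) unfolding far_tuple_def by blast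
  then show ?thesis using assms(1) unfolding far_tuple_def by (intro exI[of _ u]) blast
qed

lemma uhom_meets:
  assumes "uhom P" and "k \<noteq> 0"
  shows "(\<exists>c\<in>meets d k Y. P c) \<longleftrightarrow> far_tuple P d Y k"
  unfolding meets_def far_tuple_def using uhom_meet[OF assms] by blast

text \<open>A P-far tuple in a generated space can be moved to a P-far tuple of generators, by
  replacing each point with a P-near generator.\<close>
lemma far_tuple_generators:
  assumes metric: "bool_metric Y d" and P: "uhom P"
    and gen: "generates d S Y" and SY: "S \<subseteq> Y" and far: "far_tuple P d Y k"
  shows "far_tuple P d S k"
proof -
  obtain u where uY: "\<forall>i\<le>k. u i \<in> Y"
    and u_far: "\<forall>i j. i < j \<and> j \<le> k \<longrightarrow> P (d (u i) (u j))"
    using far unfolding far_tuple_def by blast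
  define v where "v i = (SOME s. s \<in> S \<and> near P d (u i) s)" for i
  have v: "v i \<in> S \<and> near P d (u i) (v i)" if "i \<le> k" for i
    unfolding v_def using generates_near[OF P gen] uY that
    by (metis (no_types, lifting) someI_ex)
  have "P (d (v i) (v j))" if "i < j" "j \<le> k" for i j
  proof -
    have X: "u i \<in> Y" "u j \<in> Y" "v i \<in> Y" "v j \<in> Y" using uY v SY that by auto
    have "P (d (u i) (u j))" using u_far that by blast
    then have "P (d (v i) (u j))" using near_far[OF metric P X(1,3,2)] v that by simp
    then show ?thesis using near_far_right[OF metric P X(3,2,4)] v that by simp
  qed
  then show ?thesis using v unfolding far_tuple_def by blast
qed

lemma alpha_eqI:
  assumes "k \<noteq> 0" and lub: "is_lub (meets d k Y) s"
  shows "alpha Y d k = s"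
proof -
  have "alpha Y d k = (THE s. is_lub (meets d k Y) s)" by (rule alpha_meets[OF assms(1)])
  also have "\<dots> = s"
  proof (rule the_equality[where P = "is_lub (meets d k Y)", OF lub])
    fix t assume "is_lub (meets d k Y) t"
    then show "t = s" using lub unfolding is_lub_def by (meson order.antisym)
  qed
  finally show ?thesis .
qed

text \<open>For a space finitely generated by S the supremum defining alpha_k exists: it is the
  finite join of the meets of tuples from S, since every tuple from Y is dominated, under
  every ultrafilter, by a tuple of generators.\<close>
lemma alpha_generated:
  assumes metric: "bool_metric Y d" and fin: "finite S" and SY: "S \<subseteq> Y"
    and gen: "generates d S Y" and "Y \<noteq> {}" and k: "k \<noteq> 0"
  shows "alpha Y d k = Sup_fin (meets d k S)"
proof (rule alpha_eqI[OF k])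
  obtain s where "s \<in> S" using generates_nonempty[OF gen \<open>Y \<noteq> {}\<close>] by blast
  have fin_ne: "finite (meets d k S)" "meets d k S \<noteq> {}"
    using meets_finite[OF fin] meets_nonempty[OF \<open>s \<in> S\<close>] .
  have upper: "c \<le> Sup_fin (meets d k S)" if "c \<in> meets d k Y" for c
  proof (rule uhom_le)
    fix P :: "'b \<Rightarrow> bool" assume P: "uhom P" and "P c"
    then have "far_tuple P d Y k" using uhom_meets[OF P k] that by blast
    then have "far_tuple P d S k" using far_tuple_generators[OF metric P gen SY] by blast
    then show "P (Sup_fin (meets d k S))"
      using uhom_meets[OF P k] uhom_Sup_fin[OF fin_ne P] by blast
  qed
  have least: "Sup_fin (meets d k S) \<le> t" if "\<forall>c\<in>meets d k Y. c \<le> t" for t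
    using that meets_mono[OF SY] by (intro Sup_fin.boundedI[OF fin_ne]) blast
  show "is_lub (meets d k Y) (Sup_fin (meets d k S))"
    unfolding is_lub_def using upper least by blast
qed

lemma uhom_alpha:
  assumes metric: "bool_metric Y d" and fin: "finite S" and SY: "S \<subseteq> Y"
    and gen: "generates d S Y" and y: "y \<in> Y" and P: "uhom P"
  shows "P (alpha Y d k) \<longleftrightarrow> far_tuple P d Y k"
proof (cases "k = 0")
  case True
  have "far_tuple P d Y 0" using y unfolding far_tuple_def by (intro exI[of _ "\<lambda>_. y"]) simp
  then show ?thesis using True uhom_top[OF P] by (simp add: alpha_def)
next
  case False
  obtain s where "s \<in> S" using generates_nonempty[OF gen] y by blast
  have fin_ne: "finite (meets d k S)" "meets d k S \<noteq> {}"
    using meets_finite[OF fin] meets_nonempty[OF \<open>s \<in> S\<close>] .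
  have "alpha Y d k = Sup_fin (meets d k S)"
    using alpha_generated[OF metric fin SY gen _ False] y by blast
  then have "P (alpha Y d k) \<longleftrightarrow> far_tuple P d S k"
    using uhom_Sup_fin[OF fin_ne P] uhom_meets[OF P False] by simp
  also have "\<dots> \<longleftrightarrow> far_tuple P d Y k"
    using far_tuple_generators[OF metric P gen SY] far_tuple_mono[OF SY] by blast
  finally show ?thesis .
qed

text \<open>C has more than k elements (C may be infinite).\<close>
definition more_than :: "'c set \<Rightarrow> nat \<Rightarrow> bool" where
  "more_than C k \<longleftrightarrow> (\<exists>F. F \<subseteq> C \<and> finite F \<and> card F = Suc k)"

lemma more_thanI: "F \<subseteq> C \<Longrightarrow> finite F \<Longrightarrow> Suc k \<le> card F \<Longrightarrow> more_than C k"
  unfolding more_than_def by (meson obtain_subset_with_card_n order.trans rev_finite_subset)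

lemma more_than_Un:
  assumes AB: "A \<inter> B \<subseteq> {z}" and zA: "z \<in> A" and zB: "z \<in> B"
  shows "more_than (A \<union> B) n \<longleftrightarrow> (\<exists>i\<le>n. more_than A i \<and> more_than B (n - i))"
proof
  assume "more_than (A \<union> B) n"
  then obtain F where F: "F \<subseteq> A \<union> B" "finite F" "card F = Suc n"
    unfolding more_than_def by blast
  define FA where "FA = insert z (F \<inter> A)"
  define FB where "FB = insert z (F \<inter> B)"
  have fin: "finite FA" "finite FB" using F(2) unfolding FA_def FB_def by auto
  have sub: "FA \<subseteq> A" "FB \<subseteq> B" using F(1) zA zB unfolding FA_def FB_def by auto
  have "FA \<union> FB = insert z F" using F(1) unfolding FA_def FB_def by auto
  moreover have "FA \<inter> FB = {z}" using AB unfolding FA_def FB_def by auto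
  ultimately have "card FA + card FB \<ge> Suc (Suc n)"
    using card_Un_Int[OF fin] F(2,3) card_mono[OF _ subset_insertI[of F z]] by simp
  moreover have "card FA \<ge> 1" "card FB \<ge> 1"
    using fin unfolding FA_def FB_def by (simp_all add: card_gt_0_iff Suc_le_eq)
  ultimately show "\<exists>i\<le>n. more_than A i \<and> more_than B (n - i)"
    using more_thanI[OF sub(1) fin(1)] more_thanI[OF sub(2) fin(2)]
    by (intro exI[of _ "min n (card FA - 1)"]) auto
next
  assume "\<exists>i\<le>n. more_than A i \<and> more_than B (n - i)"
  then obtain i FA FB where i: "i \<le> n" and FA: "FA \<subseteq> A" "finite FA" "card FA = Suc i"
    and FB: "FB \<subseteq> B" "finite FB" "card FB = Suc (n - i)" unfolding more_than_def by blast
  have "card (FA \<inter> FB) \<le> 1"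
    using FA FB AB card_mono[of "{z}" "FA \<inter> FB"] by fastforce
  then have "card (FA \<union> FB) \<ge> Suc n" using card_Un_Int[OF FA(2) FB(2)] FA(3) FB(3) i by simp
  then show "more_than (A \<union> B) n" using more_thanI[of "FA \<union> FB" "A \<union> B" n] FA FB by auto
qed

definition near_class ::
    "('b::boolean_algebra \<Rightarrow> bool) \<Rightarrow> ('a \<Rightarrow> 'a \<Rightarrow> 'b) \<Rightarrow> 'a set \<Rightarrow> 'a \<Rightarrow> 'a set" where
  "near_class P d X x = {y \<in> X. near P d x y}"

context
  fixes X :: "'a set" and d :: "'a \<Rightarrow> 'a \<Rightarrow> 'b::boolean_algebra" and P :: "'b \<Rightarrow> bool"
  assumes metric: "bool_metric X d" and P: "uhom P"
begin

lemma near_class_eq: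
  assumes "x \<in> X" "y \<in> X"
  shows "near_class P d X x = near_class P d X y \<longleftrightarrow> near P d x y"
proof
  assume "near_class P d X x = near_class P d X y"
  then have "y \<in> near_class P d X x"
    using near_refl[OF metric P assms(2)] assms(2) unfolding near_class_def by blast
  then show "near P d x y" unfolding near_class_def by blast
next
  assume xy: "near P d x y"
  have "near P d x z \<longleftrightarrow> near P d y z" if "z \<in> X" for z
    using near_trans[OF metric P] near_sym[OF metric P] assms that xy by metis
  then show "near_class P d X x = near_class P d X y" unfolding near_class_def by blast
qed

lemma far_tuple_more_classes:
  assumes YX: "Y \<subseteq> X" and "far_tuple P d Y k"
  shows "more_than (near_class P d X ` Y) k"
proof -
  obtain u where uY: "\<forall>i\<le>k. u i \<in> Y"
    and far: "\<forall>i j. i < j \<and> j \<le> k \<longrightarrow> \<not> near P d (u i) (u j)"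
    using assms(2) unfolding far_tuple_def near_def by blast
  have "inj_on (near_class P d X \<circ> u) {..k}"
  proof (rule inj_onI)
    fix i j assume ij: "i \<in> {..k}" "j \<in> {..k}"
      and eq: "(near_class P d X \<circ> u) i = (near_class P d X \<circ> u) j"
    have X: "u i \<in> X" "u j \<in> X" using ij uY YX by auto
    have "near P d (u i) (u j)" "near P d (u j) (u i)"
      using eq near_class_eq[OF X] near_sym[OF metric P X] by simp_all
    then show "i = j" using far ij by (metis atMost_iff linorder_neqE_nat)
  qed
  then have "card ((near_class P d X \<circ> u) ` {..k}) = Suc k" using card_image by fastforce
  moreover have "(near_class P d X \<circ> u) ` {..k} \<subseteq> near_class P d X ` Y" using uY by auto
  ultimately show ?thesis unfolding more_than_def by blast
qed

lemma more_classes_far_tuple: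
  assumes YX: "Y \<subseteq> X" and "more_than (near_class P d X ` Y) k"
  shows "far_tuple P d Y k"
proof -
  obtain F where F: "F \<subseteq> near_class P d X ` Y" "finite F" "card F = Suc k"
    using assms(2) unfolding more_than_def by blast
  obtain h where h: "bij_betw h {..k} F"
    using ex_bij_betw_nat_finite[OF F(2)] F(3) by (metis atLeast0LessThan lessThan_Suc_atMost)
  have "h i \<in> near_class P d X ` Y" if "i \<le> k" for i
    using bij_betwE[OF h] F(1) that by blast
  then have "\<forall>i. \<exists>y. i \<le> k \<longrightarrow> y \<in> Y \<and> near_class P d X y = h i" by (metis imageE)
  then obtain u where u: "\<And>i. i \<le> k \<Longrightarrow> u i \<in> Y \<and> near_class P d X (u i) = h i"
    by (metis choice)
  have "\<not> near P d (u i) (u j)" if "i < j" "j \<le> k" for i j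
  proof
    assume "near P d (u i) (u j)"
    moreover have "u i \<in> X" "u j \<in> X" using u that YX by auto
    ultimately have "near_class P d X (u i) = near_class P d X (u j)" using near_class_eq by blast
    then have "h i = h j" using u that by simp
    moreover have "i \<in> {..k}" "j \<in> {..k}" using that by auto
    ultimately have "i = j" using h unfolding bij_betw_def inj_on_def by blast
    then show False using \<open>i < j\<close> by simp
  qed
  then show ?thesis using u unfolding far_tuple_def near_def by (intro exI[of _ u]) simp
qed

lemma far_tuple_classes:
  "Y \<subseteq> X \<Longrightarrow> far_tuple P d Y k \<longleftrightarrow> more_than (near_class P d X ` Y) k"
  using far_tuple_more_classes more_classes_far_tuple by blast

end

lemma convex_mixture:
  assumes convex: "convex_space X d" and "x \<in> X" "y \<in> X"
  shows "\<exists>z\<in>X. inf b (d z x) = bot \<and> inf (- b) (d z y) = bot"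
proof -
  define xs where "xs = (\<lambda>i::nat. if i = 0 then x else y)"
  define a where "a = (\<lambda>i::nat. if i = 0 then b else - b)"
  have "a ` {..1} = {b, - b}" unfolding a_def by (auto simp: le_Suc_eq)
  then have "is_partition 1 a"
    unfolding is_partition_def by (auto simp: a_def le_Suc_eq)
  moreover have "\<forall>i\<le>1. xs i \<in> X" using assms(2,3) unfolding xs_def by simp
  ultimately obtain z where "z \<in> X" "convex_comb d z 1 xs a"
    using convex unfolding convex_space_def by blast
  then show ?thesis unfolding convex_comb_def a_def xs_def
    by (intro bexI[of _ z]) (auto dest: spec[of _ 0] spec[of _ 1])
qed

locale pointed_subspace =
  fixes X U :: "'a set" and d :: "'a \<Rightarrow> 'a \<Rightarrow> 'b::boolean_algebra" and p :: 'a and SU :: "'a set"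
  assumes metric: "bool_metric X d" and convex: "convex_space X d"
    and U_subset: "U \<subseteq> X" and p_U: "p \<in> U"
    and SU_finite: "finite SU" and SU_subset: "SU \<subseteq> U" and SU_generates: "generates d SU U"
begin

abbreviation W :: "'a set" where "W \<equiv> orth_compl X d p U"

lemma p_X: "p \<in> X" using U_subset p_U by blast

lemma W_subset: "W \<subseteq> X" unfolding orth_compl_def by blast

lemma dist_W: "w \<in> W \<Longrightarrow> v \<in> U \<Longrightarrow> d v w = sup (d v p) (d w p)"
  unfolding orth_compl_def orth_def by blast

lemma p_W: "p \<in> W"
proof -
  have "d p p = bot" using metric p_X unfolding bool_metric_def by blast
  then show ?thesis using p_X unfolding orth_compl_def orth_def by simp
qed

text \<open>The distance from x to U, computed on the generators (every point of U is a convex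
  combination of generators).  Under P it holds iff x is P-far from all of U.\<close>
definition dist_U :: "'a \<Rightarrow> 'b" where
  "dist_U x = Inf_fin (d x ` SU)"

lemma uhom_dist_U:
  assumes P: "uhom P" and x: "x \<in> X"
  shows "P (dist_U x) \<longleftrightarrow> (\<forall>v\<in>U. P (d x v))"
proof -
  have SU_ne: "SU \<noteq> {}" using generates_nonempty[OF SU_generates] p_U by blast
  have "P (dist_U x) \<longleftrightarrow> (\<forall>s\<in>SU. P (d x s))"
    unfolding dist_U_def using uhom_Inf_fin[OF _ _ P] SU_finite SU_ne by simp
  also have "\<dots> \<longleftrightarrow> (\<forall>v\<in>U. P (d x v))"
  proof
    assume far: "\<forall>s\<in>SU. P (d x s)"
    show "\<forall>v\<in>U. P (d x v)"
    proof
      fix v assume "v \<in> U"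
      then obtain s where "s \<in> SU" "near P d v s"
        using generates_near[OF P SU_generates] by blast
      moreover have "v \<in> X" "s \<in> X" using \<open>v \<in> U\<close> \<open>s \<in> SU\<close> SU_subset U_subset by auto
      ultimately show "P (d x v)" using near_far_right[OF metric P x] far by blast
    qed
  qed (use SU_subset in blast)
  finally show ?thesis .
qed

text \<open>The projection onto W: glue x (where x is far from U) with p (elsewhere).  The result
  is orthogonal to every point of U.\<close>
lemma projection_exists:
  assumes x: "x \<in> X"
  shows "\<exists>z\<in>W. inf (dist_U x) (d z x) = bot \<and> inf (- dist_U x) (d z p) = bot"
proof -
  obtain z where z: "z \<in> X" and on_e: "inf (dist_U x) (d z x) = bot"
    and off_e: "inf (- dist_U x) (d z p) = bot"
    using convex_mixture[OF convex x p_X] by blast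
  have "d v z = sup (d v p) (d z p)" if v: "v \<in> U" for v
  proof (rule uhom_ext)
    fix P :: "'b \<Rightarrow> bool" assume P: "uhom P"
    have vX: "v \<in> X" using v U_subset by blast
    show "P (d v z) = P (sup (d v p) (d z p))"
    proof (cases "P (dist_U x)")
      case True
      then have "near P d z x" by (rule near_of_disjoint[where d = d, OF P on_e])
      moreover have "P (d x v)" "P (d x p)" using True uhom_dist_U[OF P x] v p_U by blast+
      ultimately have "P (d v z)" "P (d z p)"
        using near_far[OF metric P z x] near_far_right[OF metric P vX z x]
          dist_sym[OF metric x vX]
        by (simp_all add: p_X)
      then show ?thesis using uhom_sup[OF P] by simp
    next
      case False
      then have "P (- dist_U x)" using uhom_neg[OF P] by simp
      then have "near P d z p" by (rule near_of_disjoint[where d = d, OF P off_e])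
      then have "P (d v z) = P (d v p)" "\<not> P (d z p)"
        using near_far_right[OF metric P vX z p_X] unfolding near_def by simp_all
      then show ?thesis using uhom_sup[OF P] by simp
    qed
  qed
  then have "z \<in> W" using z unfolding orth_compl_def orth_def by blast
  then show ?thesis using on_e off_e by blast
qed

definition proj :: "'a \<Rightarrow> 'a" where
  "proj x = (SOME z. z \<in> W \<and> inf (dist_U x) (d z x) = bot \<and> inf (- dist_U x) (d z p) = bot)"

lemma proj:
  assumes "x \<in> X"
  shows "proj x \<in> W" and "inf (dist_U x) (d (proj x) x) = bot"
    and "inf (- dist_U x) (d (proj x) p) = bot"
  using someI_ex[OF projection_exists[OF assms, unfolded Bex_def]] unfolding proj_def by blast+

lemma proj_X: "x \<in> X \<Longrightarrow> proj x \<in> X"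
  using proj(1) W_subset by blast

lemma uhom_proj:
  assumes P: "uhom P" and x: "x \<in> X"
  shows "P (dist_U x) \<Longrightarrow> near P d (proj x) x"
    and "\<not> P (dist_U x) \<Longrightarrow> near P d (proj x) p"
proof -
  show "P (dist_U x) \<Longrightarrow> near P d (proj x) x"
    by (rule near_of_disjoint[where d = d, OF P proj(2)[OF x]])
  show "\<not> P (dist_U x) \<Longrightarrow> near P d (proj x) p"
    using near_of_disjoint[where d = d, OF P proj(3)[OF x]] uhom_neg[OF P] by simp
qed

lemma proj_contracts:
  assumes w: "w \<in> W" and s: "s \<in> X"
  shows "d w (proj s) \<le> d w s"
proof (rule uhom_le)
  fix P :: "'b \<Rightarrow> bool" assume P: "uhom P" and far: "P (d w (proj s))"
  have wX: "w \<in> X" using w W_subset by blast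
  show "P (d w s)"
  proof (cases "P (dist_U s)")
    case True
    then show ?thesis
      using near_far_right[OF metric P wX proj_X[OF s] s] uhom_proj(1)[OF P s] far by simp
  next
    case False
    then obtain v where v: "v \<in> U" "near P d s v"
      using uhom_dist_U[OF P s] unfolding near_def by blast
    have vX: "v \<in> X" using v U_subset by blast
    have "P (d w p)"
      using near_far_right[OF metric P wX proj_X[OF s] p_X] uhom_proj(2)[OF P s False] far by simp
    then have "P (d v w)" using dist_W[OF w v(1)] uhom_sup[OF P] by simp
    then show ?thesis
      using near_far_right[OF metric P wX s vX v(2)] dist_sym[OF metric vX wX] by simp
  qed
qed

text \<open>Hence W is generated by the projections of generators of X; in particular alpha of W
  is well defined.\<close>
lemma generates_W:
  assumes gen: "generates d S X" and SX: "S \<subseteq> X"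
  shows "generates d (proj ` S) W"
  unfolding generates_def
proof
  fix w assume w: "w \<in> W"
  then obtain n xs a where S: "\<forall>i\<le>n. xs i \<in> S" and comb: "convex_comb d w n xs a"
    using gen W_subset unfolding generates_def by blast
  have "inf (a l) (d w (proj (xs l))) = bot" if "l \<le> n" for l
  proof -
    have "xs l \<in> X" using S SX that by blast
    then have "inf (a l) (d w (proj (xs l))) \<le> inf (a l) (d w (xs l))"
      by (intro inf_mono order_refl proj_contracts[OF w])
    then show ?thesis using comb that unfolding convex_comb_def by (simp add: bot_unique)
  qed
  then have "convex_comb d w n (proj \<circ> xs) a" using comb unfolding convex_comb_def by simp
  moreover have "\<forall>i\<le>n. (proj \<circ> xs) i \<in> proj ` S" using S by simp
  ultimately show "\<exists>n ys b. (\<forall>i\<le>n. ys i \<in> proj ` S) \<and> convex_comb d w n ys b" by blast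
qed

lemma near_classes_cover:
  assumes P: "uhom P"
  shows "near_class P d X ` X = near_class P d X ` U \<union> near_class P d X ` W"
proof
  show "near_class P d X ` U \<union> near_class P d X ` W \<subseteq> near_class P d X ` X"
    using U_subset W_subset by blast
  show "near_class P d X ` X \<subseteq> near_class P d X ` U \<union> near_class P d X ` W"
  proof
    fix c assume "c \<in> near_class P d X ` X"
    then obtain x where x: "x \<in> X" and c: "c = near_class P d X x" by blast
    show "c \<in> near_class P d X ` U \<union> near_class P d X ` W"
    proof (cases "P (dist_U x)")
      case True
      then have "near P d (proj x) x" by (rule uhom_proj(1)[OF P x])
      then have "near_class P d X (proj x) = c"
        using near_class_eq[OF metric P proj_X[OF x] x] c by simp
      then show ?thesis using proj(1)[OF x] by blast
    next
      case False
      then obtain v where v: "v \<in> U" "near P d x v"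
        using uhom_dist_U[OF P x] unfolding near_def by blast
      then have "near_class P d X v = c"
        using near_class_eq[OF metric P x] U_subset c by blast
      then show ?thesis using v(1) by blast
    qed
  qed
qed

lemma near_classes_meet:
  assumes P: "uhom P"
  shows "near_class P d X ` U \<inter> near_class P d X ` W \<subseteq> {near_class P d X p}"
proof
  fix c assume "c \<in> near_class P d X ` U \<inter> near_class P d X ` W"
  then obtain v w where v: "v \<in> U" and w: "w \<in> W"
    and c: "c = near_class P d X v" "c = near_class P d X w" by blast
  have X: "v \<in> X" "w \<in> X" using v w U_subset W_subset by blast+
  have "near P d v w" using near_class_eq[OF metric P X] c by simp
  then have "near P d v p" using dist_W[OF w v] uhom_sup[OF P] unfolding near_def by simp
  then show "c \<in> {near_class P d X p}" using near_class_eq[OF metric P X(1) p_X] c by simp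
qed

lemma uhom_alpha_decomposition:
  assumes SX: "finite SX" "SX \<subseteq> X" "generates d SX X" and P: "uhom P"
  shows "P (alpha X d n) \<longleftrightarrow> (\<exists>i\<le>n. P (alpha U d i) \<and> P (alpha W d (n - i)))"
proof -
  let ?cls = "near_class P d X"
  have alpha_X: "P (alpha X d k) \<longleftrightarrow> more_than (?cls ` X) k" for k
    using uhom_alpha[OF metric SX(1,2,3) p_X P] far_tuple_classes[OF metric P order_refl] by simp
  have alpha_U: "P (alpha U d k) \<longleftrightarrow> more_than (?cls ` U) k" for k
    using uhom_alpha[OF bool_metric_subset[OF metric U_subset] SU_finite SU_subset
        SU_generates p_U P] far_tuple_classes[OF metric P U_subset] by simp
  have alpha_W: "P (alpha W d k) \<longleftrightarrow> more_than (?cls ` W) k" for k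
    using uhom_alpha[OF bool_metric_subset[OF metric W_subset] _ _ generates_W[OF SX(3,2)] p_W P]
      far_tuple_classes[OF metric P W_subset] proj(1) SX(1,2) by auto
  have "P (alpha X d n) \<longleftrightarrow> more_than (?cls ` U \<union> ?cls ` W) n"
    using alpha_X near_classes_cover[OF P] by simp
  also have "\<dots> \<longleftrightarrow> (\<exists>i\<le>n. more_than (?cls ` U) i \<and> more_than (?cls ` W) (n - i))"
    using more_than_Un[OF near_classes_meet[OF P]] p_U p_W by blast
  finally show ?thesis using alpha_U alpha_W by simp
qed

end

theorem lemma3p2:
  fixes X U :: "'a set" and d :: "'a \<Rightarrow> 'a \<Rightarrow> 'b::boolean_algebra" and p :: 'a and n :: nat
  assumes "CFG_space X d" and "p \<in> X"
    and "U \<subseteq> X" and "CFG_space U d" and "p \<in> U"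
  shows "alpha X d n =
    Sup_fin ((\<lambda>i. inf (alpha U d i) (alpha (orth_compl X d p U) d (n - i))) ` {..n})"
proof -
  obtain SU where SU: "finite SU" "SU \<subseteq> U" "generates d SU U"
    using assms(4) unfolding CFG_space_def fin_generated_def generates_def by blast
  obtain SX where SX: "finite SX" "SX \<subseteq> X" "generates d SX X"
    using assms(1) unfolding CFG_space_def fin_generated_def generates_def by blast
  interpret pointed_subspace X U d p SU
    using assms SU unfolding CFG_space_def by unfold_locales auto
  show ?thesis
  proof (rule uhom_ext)
    fix P :: "'b \<Rightarrow> bool" assume P: "uhom P"
    show "P (alpha X d n) = P (Sup_fin ((\<lambda>i. inf (alpha U d i) (alpha W d (n - i))) ` {..n}))"
      using uhom_alpha_decomposition[OF SX P] uhom_Sup_fin[OF _ _ P] uhom_inf[OF P] by (simp add: Bex_def)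
  qed
qed

end
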